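(* Let $\alpha\in(0,1/2)$ and $H\in C^{2\alpha}([0,1])\cap D_\alpha$. For $M\ge2$, $y_l=l/M$, $\delta=1/M$, let $H_k:=\frac1M\sum_{l=1}^{M-1}H(y_l)e_k(y_l)$ and $H^M:=\sum_{k=1}^{M-1}H_ke_k$. Then there is a constant $C>0$ (independent of $H$ and $M$) such that $$\|H-H^M\|^2_{L^2}\le CK^2\delta^{\frac{8\alpha^2}{4\alpha+1}},\qquad K:=\max\big(\|H\|_\infty,\|H\|_{C^{2\alpha}},\|H\|_{D_\alpha}\big).$$
   Context: $e_k(y)=\sqrt2\sin(\pi ky)$, $\lambda_k=\vartheta\pi^2k^2$ for a fixed $\vartheta>0$; $D_\alpha=\{u\in L^2((0,1)):\sum_k\lambda_k^{2\alpha}\langle u,e_k\rangle^2<\infty\}$ with norm $\|u\|_{D_\alpha}=(\sum_k\lambda_k^{2\alpha}\langle u,e_k\rangle_{L^2}^2)^{1/2}$; $C^{2\alpha}([0,1])$ the Hölder space with norm $\|u\|_\infty+\sup_{x\ne y}|u(x)-u(y)|/|x-y|^{2\alpha}$; $\|\cdot\|_{L^2}$ the norm of $L^2((0,1))$. *)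

theory Defs
  imports "HOL-Analysis.Analysis"
begin

definition ebasis :: "nat \<Rightarrow> real \<Rightarrow> real" where
  "ebasis k y = sqrt 2 * sin (pi * real k * y)"

definition lam :: "real \<Rightarrow> nat \<Rightarrow> real" where
  "lam \<theta> k = \<theta> * pi\<^sup>2 * (real k)\<^sup>2"

definition L2_inner :: "(real \<Rightarrow> real) \<Rightarrow> (real \<Rightarrow> real) \<Rightarrow> real" where
  "L2_inner u v = integral {0..1} (\<lambda>y. u y * v y)"

definition L2_norm :: "(real \<Rightarrow> real) \<Rightarrow> real" where
  "L2_norm u = sqrt (integral {0..1} (\<lambda>y. (u y)\<^sup>2))"

definition sup_norm :: "(real \<Rightarrow> real) \<Rightarrow> real" where
  "sup_norm u = (SUP x\<in>{0..1}. \<bar>u x\<bar>)"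

definition holder_space :: "real \<Rightarrow> (real \<Rightarrow> real) set" where
  "holder_space \<alpha> = {u. \<exists>L. \<forall>x\<in>{0..1}. \<forall>y\<in>{0..1}.
      \<bar>u x - u y\<bar> \<le> L * \<bar>x - y\<bar> powr (2 * \<alpha>)}"

definition holder_norm :: "real \<Rightarrow> (real \<Rightarrow> real) \<Rightarrow> real" where
  "holder_norm \<alpha> u = sup_norm u +
     (SUP p\<in>{(x, y). x \<in> {0..1} \<and> y \<in> {0..1} \<and> x \<noteq> y}.
        \<bar>u (fst p) - u (snd p)\<bar> / \<bar>fst p - snd p\<bar> powr (2 * \<alpha>))"

definition D_space :: "real \<Rightarrow> real \<Rightarrow> (real \<Rightarrow> real) set" where
  "D_space \<theta> \<alpha> = {u. (\<lambda>y. (u y)\<^sup>2) integrable_on {0..1} \<and>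
      summable (\<lambda>k. lam \<theta> (Suc k) powr (2 * \<alpha>) * (L2_inner u (ebasis (Suc k)))\<^sup>2)}"

definition D_norm :: "real \<Rightarrow> real \<Rightarrow> (real \<Rightarrow> real) \<Rightarrow> real" where
  "D_norm \<theta> \<alpha> u = sqrt (\<Sum>k. lam \<theta> (Suc k) powr (2 * \<alpha>) * (L2_inner u (ebasis (Suc k)))\<^sup>2)"

definition disc_coeff :: "nat \<Rightarrow> (real \<Rightarrow> real) \<Rightarrow> nat \<Rightarrow> real" where
  "disc_coeff M H k = (1 / real M) * (\<Sum>l=1..M-1. H (real l / real M) * ebasis k (real l / real M))"

definition disc_interp :: "nat \<Rightarrow> (real \<Rightarrow> real) \<Rightarrow> real \<Rightarrow> real" where
  "disc_interp M H y = (\<Sum>k=1..M-1. disc_coeff M H k * ebasis k y)"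

end

theory Submission
  imports Defs
begin

text \<open>Let \<open>G\<close> be the Fejer (Cesaro) mean of the interpolant, with coefficients \<open>(1 - k/M) H\<^sub>k\<close>.
  By discrete orthogonality of the sine basis at the nodes \<open>l/M\<close>, the coefficients of \<open>G - H\<^sup>M\<close>
  are the discrete coefficients of \<open>G - H\<close>, so the \<open>L\<^sup>2\<close> error of \<open>H\<^sup>M\<close> is controlled by the
  \<open>L\<^sup>2\<close> norm of \<open>H - G\<close> and by its mean square over the nodes.
  The Fejer kernel is nonnegative, and its translates by the nodes together with their reflections
  have total mass \<open>2 M\<close>; hence \<open>H - G\<close> is an average of differences \<open>H y - H (l/M)\<close> and of
  reflected terms. This bounds \<open>H - G\<close> by \<open>2 \<parallel>H\<parallel>\<^sub>\<infinity>\<close> everywhere and, at distance \<open>\<eta>\<close> from the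
  boundary, by the Hoelder modulus at scale \<open>\<rho>\<close> plus kernel tails of order
  \<open>1/(M \<rho>\<^sup>2) + 1/(M \<eta>)\<close>. Choosing \<open>\<eta> = M powr -\<gamma>\<close> and \<open>\<rho> = \<eta> powr (1/(4 \<alpha>))\<close> with
  \<open>\<gamma> = 8 \<alpha>\<^sup>2 / (4 \<alpha> + 1)\<close> balances these terms against the boundary layer of width \<open>\<eta>\<close>.\<close>

section \<open>The Fejer kernel\<close>

lemma sin_ge_quarter:
  fixes y :: real
  assumes "0 \<le> y" "y \<le> pi/2"
  shows "y/4 \<le> sin y"
proof (cases "y \<le> pi/3")
  case True
  have "sin 0 - 0/2 \<le> sin y - y/2"
  proof (rule DERIV_nonneg_imp_nondecreasing[of 0 y "\<lambda>y. sin y - y/2"])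
    show "0 \<le> y" by fact
    fix x assume x: "0 \<le> x" "x \<le> y"
    show "\<exists>d. ((\<lambda>y. sin y - y/2) has_real_derivative d) (at x) \<and> 0 \<le> d"
    proof (intro exI conjI)
      show "((\<lambda>y. sin y - y/2) has_real_derivative (cos x - 1/2)) (at x)"
        by (auto intro!: derivative_eq_intros)
      have "cos (pi/3) \<le> cos x" using x True by (subst cos_mono_le_eq) auto
      then show "0 \<le> cos x - 1/2" by (simp add: cos_60)
    qed
  qed
  then show ?thesis using assms by simp
next
  case False
  have "sin (pi/6) \<le> sin y" using False assms by (subst sin_mono_le_eq) auto
  moreover have "y/4 \<le> 1/2" using assms pi_less_4 by simp
  ultimately show ?thesis by (simp add: sin_30)
qed

lemma one_minus_cos_pi_ge:
  fixes s :: real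
  assumes "\<bar>s\<bar> \<le> 1"
  shows "s\<^sup>2/4 \<le> 1 - cos (pi * s)"
proof -
  define y where "y = pi * \<bar>s\<bar> / 2"
  have y: "0 \<le> y" "y \<le> pi/2" using assms by (auto simp: y_def)
  have "cos (pi * s) = cos (2 * y)" unfolding y_def by (cases "s \<ge> 0") (simp_all add: abs_if)
  then have "1 - cos (pi * s) = 2 * (sin y)\<^sup>2" by (simp add: cos_double_sin)
  moreover have "(y/4)\<^sup>2 \<le> (sin y)\<^sup>2" using sin_ge_quarter[OF y] y by (intro power_mono) auto
  moreover have "(y/4)\<^sup>2 = pi\<^sup>2 * s\<^sup>2/64"
    unfolding y_def by (simp add: power2_eq_square field_simps abs_mult_self_eq)
  moreover have "9 * s\<^sup>2 \<le> pi\<^sup>2 * s\<^sup>2"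
    using power_mono[of 3 pi 2] pi_gt3 by (intro mult_right_mono) auto
  ultimately show ?thesis using zero_le_power2[of s] by linarith
qed

definition fejer_kernel :: "nat \<Rightarrow> real \<Rightarrow> real" where
  "fejer_kernel M t = 1 + 2 * (\<Sum>k=1..M-1. (1 - real k / real M) * cos (real k * t))"

lemma one_minus_cos_mult_dirichlet:
  "(1 - cos t) * (1 + 2 * (\<Sum>k=1..n. cos (real k * t))) = cos (real n * t) - cos (real (Suc n) * t)"
proof (induction n)
  case 0 then show ?case by simp
next
  case (Suc n)
  have "2 * cos t * cos (real (Suc n) * t) = cos (real (Suc n) * t + t) + cos (real (Suc n) * t - t)"
    unfolding cos_add cos_diff by (simp add: algebra_simps)
  moreover have "real (Suc n) * t + t = real (Suc (Suc n)) * t" "real (Suc n) * t - t = real n * t"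
    by (simp_all add: algebra_simps)
  ultimately show ?case using Suc.IH by (simp add: algebra_simps)
qed

lemma one_minus_cos_mult_fejer_sum:
  "(1 - cos t) * (real n + 2 * (\<Sum>k=1..n. (real n - real k) * cos (real k * t))) = 1 - cos (real n * t)"
proof (induction n)
  case 0 then show ?case by simp
next
  case (Suc n)
  have "(\<Sum>k=1..Suc n. (real (Suc n) - real k) * cos (real k * t)) =
      (\<Sum>k=1..n. (real n - real k) * cos (real k * t)) + (\<Sum>k=1..n. cos (real k * t))"
    by (simp add: sum.distrib[symmetric] algebra_simps)
  then show ?case using Suc.IH one_minus_cos_mult_dirichlet[of t n] by (simp add: algebra_simps)
qed

lemma fejer_kernel_closed_form:
  assumes "M \<ge> 1"
  shows "real M * fejer_kernel M t * (1 - cos t) = 1 - cos (real M * t)"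
proof -
  obtain m where m: "M = Suc m" using assms by (cases M) auto
  have c: "real M * ((1 - real k / real M) * cos (real k * t)) = (real M - real k) * cos (real k * t)" for k
    using assms by (simp add: field_simps)
  have "real M * fejer_kernel M t =
      real M + 2 * (real M * (\<Sum>k=1..M-1. (1 - real k / real M) * cos (real k * t)))"
    unfolding fejer_kernel_def by (simp add: algebra_simps)
  also have "\<dots> = real M + 2 * (\<Sum>k=1..M. (real M - real k) * cos (real k * t))"
    unfolding sum_distrib_left c unfolding m by simp
  finally have "real M * fejer_kernel M t = real M + 2 * (\<Sum>k=1..M. (real M - real k) * cos (real k * t))" .
  then show ?thesis using one_minus_cos_mult_fejer_sum[of t M] by (simp add: algebra_simps)
qed

lemma fejer_kernel_nonneg:
  assumes "M \<ge> 1"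
  shows "0 \<le> fejer_kernel M t"
proof (cases "cos t = 1")
  case True
  then obtain n :: int where n: "t = real_of_int n * 2 * pi" using cos_one_2pi_int by blast
  have "cos (real k * t) = 1" for k
    using cos_int_2pin[of "int k * n"] n by (simp add: algebra_simps)
  then show ?thesis unfolding fejer_kernel_def
    by (intro add_nonneg_nonneg mult_nonneg_nonneg sum_nonneg) auto
next
  case False
  then have "1 - cos t > 0" using cos_le_one[of t] by linarith
  moreover have "0 \<le> real M * fejer_kernel M t * (1 - cos t)"
    using fejer_kernel_closed_form[OF assms] cos_le_one by simp
  ultimately show ?thesis using assms by (simp add: zero_le_mult_iff)
qed

lemma fejer_kernel_le:
  assumes "M \<ge> 1" "0 < \<bar>s\<bar>" "\<bar>s\<bar> \<le> 1"
  shows "fejer_kernel M (pi * s) \<le> 8 / (real M * s\<^sup>2)"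
proof -
  have "real M * fejer_kernel M (pi * s) * (1 - cos (pi * s)) \<le> 2"
    using fejer_kernel_closed_form[OF assms(1)] cos_ge_minus_one by (smt (verit))
  moreover have "real M * fejer_kernel M (pi * s) * (s\<^sup>2/4) \<le> real M * fejer_kernel M (pi * s) * (1 - cos (pi * s))"
    using one_minus_cos_pi_ge[OF assms(3)] fejer_kernel_nonneg[OF assms(1)] by (intro mult_left_mono) auto
  ultimately have "real M * fejer_kernel M (pi * s) * s\<^sup>2 \<le> 8" by simp
  then show ?thesis using assms by (simp add: field_simps)
qed

lemma fejer_kernel_reflect: "fejer_kernel M (pi * (2 - s)) = fejer_kernel M (pi * s)"
proof -
  have "cos (real k * (pi * (2 - s))) = cos (real k * (pi * s))" for k
  proof -
    have "real k * (pi * (2 - s)) = 2 * real k * pi - real k * (pi * s)" by (simp add: algebra_simps)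
    then show ?thesis by (simp add: cos_diff)
  qed
  then show ?thesis by (simp add: fejer_kernel_def)
qed

lemma fejer_kernel_le_two_sided:
  assumes "M \<ge> 1" "0 < s" "s < 2"
  shows "fejer_kernel M (pi * s) \<le> 8 / real M * (1 / s\<^sup>2 + 1 / (2 - s)\<^sup>2)"
proof -
  have split: "8 / real M * (1 / s\<^sup>2 + 1 / (2 - s)\<^sup>2) = 8 / (real M * s\<^sup>2) + 8 / (real M * (2 - s)\<^sup>2)"
    by (simp add: algebra_simps)
  have "fejer_kernel M (pi * s) \<le> 8 / (real M * s\<^sup>2) \<or> fejer_kernel M (pi * s) \<le> 8 / (real M * (2 - s)\<^sup>2)"
  proof (cases "s \<le> 1")
    case True
    then show ?thesis using fejer_kernel_le[OF assms(1), of s] assms by simp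
  next
    case False
    then show ?thesis using fejer_kernel_le[OF assms(1), of "2 - s"] assms by (simp add: fejer_kernel_reflect)
  qed
  moreover have "0 \<le> 8 / (real M * s\<^sup>2)" "0 \<le> 8 / (real M * (2 - s)\<^sup>2)" by simp_all
  ultimately show ?thesis unfolding split by linarith
qed

section \<open>Orthogonality of the sine basis\<close>

lemma sin_half_mult_dirichlet:
  "sin (t/2) * (1 + 2 * (\<Sum>l=1..m. cos (real l * t))) = sin ((real m + 1/2) * t)"
proof (induction m)
  case 0 then show ?case by simp
next
  case (Suc m)
  have "2 * sin (t/2) * cos (real (Suc m) * t) = sin (real (Suc m) * t + t/2) - sin (real (Suc m) * t - t/2)"
    unfolding sin_add sin_diff by (simp add: algebra_simps)
  moreover have "real (Suc m) * t + t/2 = (real (Suc m) + 1/2) * t" "real (Suc m) * t - t/2 = (real m + 1/2) * t"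
    by (simp_all add: algebra_simps)
  ultimately show ?case using Suc.IH by (simp add: algebra_simps)
qed

lemma sum_cos_nodes:
  assumes "M \<ge> 1" "0 < n" "n < 2 * M"
  shows "(\<Sum>l=1..M-1. cos (real l * (pi * real n / real M))) = - (1 + (-1)^n) / 2"
proof -
  define t where "t = pi * real n / real M"
  have "0 < t/2" "t/2 < pi" using assms by (auto simp: t_def field_simps)
  then have sin_pos: "sin (t/2) > 0" using sin_gt_zero by blast
  have "(real (M-1) + 1/2) * t = pi * real n - t/2"
    using assms by (simp add: t_def of_nat_diff field_simps)
  then have "sin ((real (M-1) + 1/2) * t) = - ((-1)^n) * sin (t/2)"
    by (simp add: sin_diff)
  then have "sin (t/2) * (1 + 2 * (\<Sum>l=1..M-1. cos (real l * t))) = sin (t/2) * (- ((-1)^n))"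
    using sin_half_mult_dirichlet[of t "M-1"] by simp
  then have "1 + 2 * (\<Sum>l=1..M-1. cos (real l * t)) = - ((-1)^n)"
    using sin_pos by (metis mult_cancel_left order_less_irrefl)
  then show ?thesis unfolding t_def by (simp add: field_simps)
qed

lemma ebasis_mult:
  "ebasis k x * ebasis j x = cos (pi * (real k - real j) * x) - cos (pi * (real k + real j) * x)"
proof -
  have "ebasis k x * ebasis j x = 2 * (sin (pi * real k * x) * sin (pi * real j * x))"
    unfolding ebasis_def by (simp add: algebra_simps)
  also have "\<dots> = cos (pi * real k * x - pi * real j * x) - cos (pi * real k * x + pi * real j * x)"
    unfolding cos_add cos_diff by simp
  finally show ?thesis by (simp add: algebra_simps)
qed

lemma cos_pi_mult_diff_nat:
  "cos (pi * (real k - real j) * x) = cos (pi * real (nat \<bar>int k - int j\<bar>) * x)"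
proof (cases "j \<le> k")
  case True
  then show ?thesis by (simp add: of_nat_diff)
next
  case False
  then have "pi * (real k - real j) * x = - (pi * real (nat \<bar>int k - int j\<bar>) * x)"
    by (simp add: algebra_simps)
  then show ?thesis by (simp only: cos_minus)
qed

lemma ebasis_swap: "ebasis k (real l / real M) = ebasis l (real k / real M)"
  unfolding ebasis_def by (simp add: algebra_simps)

lemma ebasis_discrete_orthogonal:
  assumes "1 \<le> k" "k \<le> M - 1" "1 \<le> j" "j \<le> M - 1"
  shows "(\<Sum>l=1..M-1. ebasis k (real l / real M) * ebasis j (real l / real M)) = (if k = j then real M else 0)"
proof -
  have M: "M \<ge> 1" using assms by simp
  define d where "d = nat \<bar>int k - int j\<bar>"
  have c: "cos (pi * real m * (real l / real M)) = cos (real l * (pi * real m / real M))" for m l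
    by (simp add: algebra_simps)
  have eq: "(\<Sum>l=1..M-1. ebasis k (real l / real M) * ebasis j (real l / real M)) =
     (\<Sum>l=1..M-1. cos (real l * (pi * real d / real M))) - (\<Sum>l=1..M-1. cos (real l * (pi * real (k + j) / real M)))"
    unfolding ebasis_mult cos_pi_mult_diff_nat sum_subtractf d_def[symmetric]
    using c[of "k + j"] c[of d] by simp
  have sum_kj: "(\<Sum>l=1..M-1. cos (real l * (pi * real (k + j) / real M))) = - (1 + (-1)^(k+j)) / 2"
    using sum_cos_nodes[OF M, of "k+j"] assms by simp
  show ?thesis
  proof (cases "k = j")
    case True
    then have "(\<Sum>l=1..M-1. cos (real l * (pi * real d / real M))) = real M - 1"
      using M by (simp add: d_def of_nat_diff)
    moreover have "(-1::real)^(k+j) = 1" using True by (simp add: power_add)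
    ultimately show ?thesis unfolding eq sum_kj using True by simp
  next
    case False
    then have "0 < d" "d < 2 * M" using assms by (auto simp: d_def)
    then have "(\<Sum>l=1..M-1. cos (real l * (pi * real d / real M))) = - (1 + (-1)^d) / 2"
      using sum_cos_nodes[OF M] by blast
    moreover have "k + j = d + 2 * min k j" unfolding d_def by auto
    then have "(-1::real)^(k+j) = (-1)^d" by (simp add: power_add power_mult)
    ultimately show ?thesis unfolding eq sum_kj using False by simp
  qed
qed

lemma disc_coeff_diff: "disc_coeff M (\<lambda>y. f y - g y) k = disc_coeff M f k - disc_coeff M g k"
  unfolding disc_coeff_def by (simp add: sum_subtractf algebra_simps)

lemma disc_coeff_sine_poly:
  assumes "1 \<le> j" "j \<le> M - 1"
  shows "disc_coeff M (\<lambda>y. \<Sum>k=1..M-1. c k * ebasis k y) j = c j"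
proof -
  have "(\<Sum>l=1..M-1. (\<Sum>k=1..M-1. c k * ebasis k (real l / real M)) * ebasis j (real l / real M))
      = (\<Sum>l=1..M-1. \<Sum>k=1..M-1. c k * (ebasis k (real l / real M) * ebasis j (real l / real M)))"
    by (simp add: sum_distrib_right mult.assoc)
  also have "\<dots> = (\<Sum>k=1..M-1. c k * (\<Sum>l=1..M-1. ebasis k (real l / real M) * ebasis j (real l / real M)))"
    by (subst sum.swap) (simp add: sum_distrib_left)
  also have "\<dots> = (\<Sum>k=1..M-1. c k * (if k = j then real M else 0))"
    by (intro sum.cong refl) (use ebasis_discrete_orthogonal assms in auto)
  also have "\<dots> = c j * real M" using assms by (simp add: if_distrib cong: if_cong)
  finally show ?thesis unfolding disc_coeff_def using assms by simp
qed

lemma disc_coeff_parseval: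
  assumes "M \<ge> 1"
  shows "(\<Sum>k=1..M-1. (disc_coeff M f k)\<^sup>2) = (1 / real M) * (\<Sum>l=1..M-1. (f (real l / real M))\<^sup>2)"
proof -
  define fl where "fl l = f (real l / real M)" for l
  define E where "E l l' = (\<Sum>k=1..M-1. ebasis l (real k / real M) * ebasis l' (real k / real M))" for l l'
  have "(\<Sum>k=1..M-1. (\<Sum>l=1..M-1. fl l * ebasis k (real l / real M))\<^sup>2)
     = (\<Sum>k=1..M-1. \<Sum>l=1..M-1. \<Sum>l'=1..M-1. fl l * fl l' * (ebasis l (real k / real M) * ebasis l' (real k / real M)))"
    by (simp add: power2_eq_square sum_product ebasis_swap algebra_simps)
  also have "\<dots> = (\<Sum>l=1..M-1. \<Sum>l'=1..M-1. fl l * fl l' * E l l')"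
    unfolding E_def sum_distrib_left by (subst sum.swap) (intro sum.cong refl sum.swap)
  also have "\<dots> = (\<Sum>l=1..M-1. \<Sum>l'=1..M-1. fl l * fl l' * (if l = l' then real M else 0))"
  proof (intro sum.cong refl)
    fix l l' assume "l \<in> {1..M-1}" "l' \<in> {1..M-1}"
    then show "fl l * fl l' * E l l' = fl l * fl l' * (if l = l' then real M else 0)"
      using ebasis_discrete_orthogonal[of l M l'] by (simp add: E_def)
  qed
  also have "\<dots> = real M * (\<Sum>l=1..M-1. (fl l)\<^sup>2)"
    by (simp add: if_distrib power2_eq_square sum_distrib_left algebra_simps cong: if_cong)
  finally have e: "(\<Sum>k=1..M-1. (\<Sum>l=1..M-1. fl l * ebasis k (real l / real M))\<^sup>2) = real M * (\<Sum>l=1..M-1. (fl l)\<^sup>2)" .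
  have "(disc_coeff M f k)\<^sup>2 = (1 / real M)^2 * (\<Sum>l=1..M-1. fl l * ebasis k (real l / real M))\<^sup>2" for k
    unfolding disc_coeff_def fl_def by (rule power_mult_distrib)
  then have "(\<Sum>k=1..M-1. (disc_coeff M f k)\<^sup>2) = (1 / real M)^2 * (real M * (\<Sum>l=1..M-1. (fl l)\<^sup>2))"
    by (simp only: sum_distrib_left[symmetric] e)
  then show ?thesis unfolding fl_def using assms by (simp add: power2_eq_square)
qed

lemma has_integral_cos_pi_mult:
  "((\<lambda>y. cos (pi * real n * y)) has_integral (if n = 0 then 1 else 0)) {0..1}"
proof (cases "n = 0")
  case True
  then show ?thesis using has_integral_const_real[of "1::real" 0 1] by simp
next
  case False
  have "((\<lambda>y. cos (pi * real n * y)) has_integral (sin (pi * real n * 1) / (pi * real n) - sin (pi * real n * 0) / (pi * real n))) {0..1}"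
  proof (rule fundamental_theorem_of_calculus)
    fix x :: real
    have "((\<lambda>y. sin (pi * real n * y) / (pi * real n)) has_real_derivative (cos (pi * real n * x) * (pi * real n) / (pi * real n))) (at x within {0..1})"
      by (auto intro!: derivative_eq_intros)
    then show "((\<lambda>y. sin (pi * real n * y) / (pi * real n)) has_vector_derivative cos (pi * real n * x)) (at x within {0..1})"
      using False by (simp add: has_real_derivative_iff_has_vector_derivative)
  qed simp
  then show ?thesis using False by simp
qed

lemma has_integral_ebasis_mult:
  assumes "1 \<le> k" "1 \<le> j"
  shows "((\<lambda>y. ebasis k y * ebasis j y) has_integral (if k = j then 1 else 0)) {0..1}"
proof -
  define d where "d = nat \<bar>int k - int j\<bar>"
  have "((\<lambda>y. cos (pi * real d * y) - cos (pi * real (k + j) * y)) has_integral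
      ((if d = 0 then 1 else 0) - (if k + j = 0 then 1 else 0))) {0..1}"
    by (intro has_integral_diff has_integral_cos_pi_mult)
  moreover have "d = 0 \<longleftrightarrow> k = j" by (auto simp: d_def)
  ultimately show ?thesis using assms unfolding ebasis_mult cos_pi_mult_diff_nat d_def by simp
qed

lemma has_integral_sine_poly_sq:
  assumes "finite A" "\<And>k. k \<in> A \<Longrightarrow> 1 \<le> k"
  shows "((\<lambda>y. (\<Sum>k\<in>A. c k * ebasis k y)\<^sup>2) has_integral (\<Sum>k\<in>A. (c k)\<^sup>2)) {0..1}"
proof -
  have e: "(\<Sum>k\<in>A. c k * ebasis k y)\<^sup>2 = (\<Sum>k\<in>A. \<Sum>j\<in>A. c k * c j * (ebasis k y * ebasis j y))" for y
    by (simp add: power2_eq_square sum_product algebra_simps)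
  have "((\<lambda>y. \<Sum>k\<in>A. \<Sum>j\<in>A. c k * c j * (ebasis k y * ebasis j y)) has_integral
        (\<Sum>k\<in>A. \<Sum>j\<in>A. c k * c j * (if k = j then 1 else 0))) {0..1}"
    using assms by (intro has_integral_sum has_integral_mult_right has_integral_ebasis_mult) auto
  moreover have "(\<Sum>k\<in>A. \<Sum>j\<in>A. c k * c j * (if k = j then 1 else 0)) = (\<Sum>k\<in>A. (c k)\<^sup>2)"
    using assms(1) by (simp add: if_distrib power2_eq_square cong: if_cong)
  ultimately show ?thesis unfolding e by simp
qed

section \<open>The Fejer mean of the discrete coefficients\<close>

definition fejer_mean :: "nat \<Rightarrow> (real \<Rightarrow> real) \<Rightarrow> real \<Rightarrow> real" where
  "fejer_mean M H y = (\<Sum>k=1..M-1. (1 - real k / real M) * disc_coeff M H k * ebasis k y)"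

lemma sum_cos_nodes_shifted:
  assumes "M \<ge> 1" "1 \<le> k" "k \<le> M - 1"
  shows "(\<Sum>l=1..M-1. cos (real k * (pi * (y - real l / real M))) + cos (real k * (pi * (y + real l / real M))))
      + cos (real k * (pi * y)) + cos (real k * (pi * (y - 1))) = 0"
proof -
  define a where "a = real k * (pi * y)"
  define S where "S = (\<Sum>l=1..M-1. cos (real l * (pi * real k / real M)))"
  have "cos (real k * (pi * (y - real l / real M))) + cos (real k * (pi * (y + real l / real M)))
      = 2 * cos a * cos (real l * (pi * real k / real M))" for l
  proof -
    have "real k * (pi * (y - real l / real M)) = a - real l * (pi * real k / real M)"
         "real k * (pi * (y + real l / real M)) = a + real l * (pi * real k / real M)"
      by (simp_all add: a_def algebra_simps)
    then show ?thesis by (simp add: cos_add cos_diff)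
  qed
  then have "(\<Sum>l=1..M-1. cos (real k * (pi * (y - real l / real M))) + cos (real k * (pi * (y + real l / real M))))
     = 2 * cos a * S"
    by (simp add: S_def sum_distrib_left)
  moreover have "real k * (pi * (y - 1)) = a - real k * pi" by (simp add: a_def algebra_simps)
  then have "cos (real k * (pi * (y - 1))) = cos a * (-1)^k" by (simp add: cos_diff)
  moreover have "S = - (1 + (-1)^k) / 2"
    using sum_cos_nodes[OF assms(1), of k] assms unfolding S_def by auto
  ultimately show ?thesis by (simp add: a_def field_simps)
qed

lemma sum_fejer_kernel_nodes:
  assumes "M \<ge> 1"
  shows "(\<Sum>l=1..M-1. fejer_kernel M (pi * (y - real l / real M)) + fejer_kernel M (pi * (y + real l / real M)))
         + fejer_kernel M (pi * y) + fejer_kernel M (pi * (y - 1)) = 2 * real M"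
proof -
  define w where "w k = 1 - real k / real M" for k
  define C where "C t = (\<Sum>k=1..M-1. w k * cos (real k * t))" for t
  have F: "fejer_kernel M t = 1 + 2 * C t" for t unfolding fejer_kernel_def C_def w_def ..
  have "(\<Sum>l=1..M-1. C (pi * (y - real l / real M)) + C (pi * (y + real l / real M))) + C (pi * y) + C (pi * (y - 1))
     = (\<Sum>k=1..M-1. w k * ((\<Sum>l=1..M-1. cos (real k * (pi * (y - real l / real M))) + cos (real k * (pi * (y + real l / real M))))
      + cos (real k * (pi * y)) + cos (real k * (pi * (y - 1)))))"
  proof -
    have "(\<Sum>l=1..M-1. C (pi * (y - real l / real M)) + C (pi * (y + real l / real M)))
       = (\<Sum>l=1..M-1. \<Sum>k=1..M-1. w k * (cos (real k * (pi * (y - real l / real M))) + cos (real k * (pi * (y + real l / real M)))))"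
      unfolding C_def by (simp add: sum.distrib[symmetric] algebra_simps)
    also have "\<dots> = (\<Sum>k=1..M-1. \<Sum>l=1..M-1. w k * (cos (real k * (pi * (y - real l / real M))) + cos (real k * (pi * (y + real l / real M)))))"
      by (rule sum.swap)
    finally show ?thesis unfolding C_def by (simp add: sum.distrib[symmetric] sum_distrib_left algebra_simps)
  qed
  also have "\<dots> = 0" using sum_cos_nodes_shifted[OF assms] by simp
  finally have C_sum: "(\<Sum>l=1..M-1. C (pi * (y - real l / real M)) + C (pi * (y + real l / real M))) + C (pi * y) + C (pi * (y - 1)) = 0" .
  have "(\<Sum>l=1..M-1. fejer_kernel M (pi * (y - real l / real M)) + fejer_kernel M (pi * (y + real l / real M)))
         + fejer_kernel M (pi * y) + fejer_kernel M (pi * (y - 1)) = 2 * real (M - 1) + 2 +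
       2 * ((\<Sum>l=1..M-1. C (pi * (y - real l / real M)) + C (pi * (y + real l / real M))) + C (pi * y) + C (pi * (y - 1)))"
    unfolding F by (simp add: sum.distrib sum_distrib_left algebra_simps)
  then show ?thesis unfolding C_sum using assms by (simp add: of_nat_diff)
qed

lemma sum_fejer_kernel_nodes_le:
  assumes "M \<ge> 1"
  shows "(\<Sum>l=1..M-1. fejer_kernel M (pi * (y - real l / real M))) \<le> 2 * real M"
proof -
  have "(\<Sum>l=1..M-1. fejer_kernel M (pi * (y - real l / real M)))
      \<le> (\<Sum>l=1..M-1. fejer_kernel M (pi * (y - real l / real M)) + fejer_kernel M (pi * (y + real l / real M)))"
    by (intro sum_mono) (simp add: fejer_kernel_nonneg[OF assms])
  then show ?thesis using sum_fejer_kernel_nodes[OF assms, of y] fejer_kernel_nonneg[OF assms] by smt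
qed

lemma ebasis_mult_points:
  "ebasis k z * ebasis k y = cos (real k * (pi * (y - z))) - cos (real k * (pi * (y + z)))"
proof -
  have "ebasis k z * ebasis k y = 2 * (sin (pi * real k * y) * sin (pi * real k * z))"
    unfolding ebasis_def by (simp add: algebra_simps)
  also have "\<dots> = cos (pi * real k * y - pi * real k * z) - cos (pi * real k * y + pi * real k * z)"
    unfolding cos_add cos_diff by simp
  finally show ?thesis by (simp add: algebra_simps)
qed

lemma fejer_mean_eq_kernel_sum:
  shows "fejer_mean M H y = (1 / (2 * real M)) * (\<Sum>l=1..M-1. H (real l / real M) *
            (fejer_kernel M (pi * (y - real l / real M)) - fejer_kernel M (pi * (y + real l / real M))))"
proof -
  have kernel: "(\<Sum>k=1..M-1. (1 - real k / real M) * (ebasis k z * ebasis k y))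
      = (fejer_kernel M (pi * (y - z)) - fejer_kernel M (pi * (y + z))) / 2" for z
    unfolding ebasis_mult_points right_diff_distrib sum_subtractf fejer_kernel_def by simp
  have "fejer_mean M H y = (\<Sum>k=1..M-1. \<Sum>l=1..M-1. (1 / real M) * H (real l / real M) *
      ((1 - real k / real M) * (ebasis k (real l / real M) * ebasis k y)))"
    unfolding fejer_mean_def disc_coeff_def sum_distrib_left sum_distrib_right
    by (intro sum.cong refl) (simp add: field_simps)
  also have "\<dots> = (\<Sum>l=1..M-1. (1 / real M) * H (real l / real M) *
      ((fejer_kernel M (pi * (y - real l / real M)) - fejer_kernel M (pi * (y + real l / real M))) / 2))"
    by (subst sum.swap) (simp only: sum_distrib_left[symmetric] kernel)
  also have "\<dots> = (1 / (2 * real M)) * (\<Sum>l=1..M-1. H (real l / real M) *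
      (fejer_kernel M (pi * (y - real l / real M)) - fejer_kernel M (pi * (y + real l / real M))))"
    unfolding sum_distrib_left by (intro sum.cong refl) (simp add: field_simps)
  finally show ?thesis .
qed

lemma fejer_mean_error_eq:
  assumes "M \<ge> 1"
  shows "H y - fejer_mean M H y = (1 / (2 * real M)) *
     ((\<Sum>l=1..M-1. (H y - H (real l / real M)) * fejer_kernel M (pi * (y - real l / real M))
        + (H y + H (real l / real M)) * fejer_kernel M (pi * (y + real l / real M)))
      + H y * (fejer_kernel M (pi * y) + fejer_kernel M (pi * (y - 1))))"
proof -
  define a where "a l = fejer_kernel M (pi * (y - real l / real M))" for l
  define b where "b l = fejer_kernel M (pi * (y + real l / real M))" for l
  define S where "S = (\<Sum>l=1..M-1. a l + b l)"
  define X where "X = (\<Sum>l=1..M-1. H (real l / real M) * (a l - b l))"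
  have boundary: "fejer_kernel M (pi * y) + fejer_kernel M (pi * (y - 1)) = 2 * real M - S"
    using sum_fejer_kernel_nodes[OF assms, of y] unfolding S_def a_def b_def by simp
  have "(\<Sum>l=1..M-1. (H y - H (real l / real M)) * a l + (H y + H (real l / real M)) * b l) = H y * S - X"
    unfolding S_def X_def sum_distrib_left sum_subtractf[symmetric] by (intro sum.cong refl) (simp add: algebra_simps)
  moreover have "fejer_mean M H y = X / (2 * real M)"
    unfolding fejer_mean_eq_kernel_sum X_def a_def b_def by simp
  ultimately show ?thesis unfolding boundary a_def[symmetric] b_def[symmetric]
    using assms by (simp add: field_simps)
qed

lemma abs_fejer_mean_error_le:
  assumes "M \<ge> 1"
  shows "\<bar>H y - fejer_mean M H y\<bar> \<le> (1 / (2 * real M)) *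
     ((\<Sum>l=1..M-1. \<bar>H y - H (real l / real M)\<bar> * fejer_kernel M (pi * (y - real l / real M))
        + \<bar>H y + H (real l / real M)\<bar> * fejer_kernel M (pi * (y + real l / real M)))
      + \<bar>H y\<bar> * (fejer_kernel M (pi * y) + fejer_kernel M (pi * (y - 1))))"
proof -
  define a where "a l = fejer_kernel M (pi * (y - real l / real M))" for l
  define b where "b l = fejer_kernel M (pi * (y + real l / real M))" for l
  define F where "F = fejer_kernel M (pi * y) + fejer_kernel M (pi * (y - 1))"
  have nonneg: "0 \<le> a l" "0 \<le> b l" "0 \<le> F" for l
    unfolding a_def b_def F_def using fejer_kernel_nonneg[OF assms] by (auto intro: add_nonneg_nonneg)
  have "\<bar>\<Sum>l=1..M-1. (H y - H (real l / real M)) * a l + (H y + H (real l / real M)) * b l\<bar>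
      \<le> (\<Sum>l=1..M-1. \<bar>H y - H (real l / real M)\<bar> * a l + \<bar>H y + H (real l / real M)\<bar> * b l)"
    by (rule order_trans[OF sum_abs sum_mono])
      (use nonneg in \<open>auto simp: abs_mult intro!: order_trans[OF abs_triangle_ineq]\<close>)
  moreover have "\<bar>H y * F\<bar> = \<bar>H y\<bar> * F" using nonneg by (simp add: abs_mult)
  ultimately have "\<bar>(\<Sum>l=1..M-1. (H y - H (real l / real M)) * a l + (H y + H (real l / real M)) * b l) + H y * F\<bar>
      \<le> (\<Sum>l=1..M-1. \<bar>H y - H (real l / real M)\<bar> * a l + \<bar>H y + H (real l / real M)\<bar> * b l) + \<bar>H y\<bar> * F"
    using abs_triangle_ineq[of "\<Sum>l=1..M-1. (H y - H (real l / real M)) * a l + (H y + H (real l / real M)) * b l" "H y * F"]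
    by linarith
  then show ?thesis
    unfolding fejer_mean_error_eq[OF assms] a_def[symmetric] b_def[symmetric] F_def[symmetric] abs_mult
    by (intro mult_mono) auto
qed

lemma abs_fejer_mean_error_le_global:
  assumes "M \<ge> 1" "y \<in> {0..1}" "\<And>x. x \<in> {0..1} \<Longrightarrow> \<bar>H x\<bar> \<le> K"
  shows "\<bar>H y - fejer_mean M H y\<bar> \<le> 2 * K"
proof -
  define a where "a l = fejer_kernel M (pi * (y - real l / real M))" for l
  define b where "b l = fejer_kernel M (pi * (y + real l / real M))" for l
  define F where "F = fejer_kernel M (pi * y) + fejer_kernel M (pi * (y - 1))"
  have nonneg: "0 \<le> a l" "0 \<le> b l" "0 \<le> F" for l
    unfolding a_def b_def F_def using fejer_kernel_nonneg[OF assms(1)] by (auto intro: add_nonneg_nonneg)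
  have node: "real l / real M \<in> {0..1}" if "l \<in> {1..M-1}" for l using that by auto
  have hy: "\<bar>H y\<bar> \<le> K" using assms by auto
  have "(\<Sum>l=1..M-1. \<bar>H y - H (real l / real M)\<bar> * a l + \<bar>H y + H (real l / real M)\<bar> * b l) + \<bar>H y\<bar> * F
     \<le> (\<Sum>l=1..M-1. 2 * K * a l + 2 * K * b l) + 2 * K * F"
  proof (intro add_mono sum_mono mult_right_mono nonneg)
    fix l assume "l \<in> {1..M-1}"
    then have "\<bar>H (real l / real M)\<bar> \<le> K" using assms(3) node by blast
    then show "\<bar>H y - H (real l / real M)\<bar> \<le> 2 * K" "\<bar>H y + H (real l / real M)\<bar> \<le> 2 * K"
      using hy by linarith+
  qed (use hy in linarith)
  also have "\<dots> = 2 * K * ((\<Sum>l=1..M-1. a l + b l) + F)"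
    by (simp add: sum_distrib_left algebra_simps)
  also have "\<dots> = 2 * K * (2 * real M)"
    using sum_fejer_kernel_nodes[OF assms(1), of y] unfolding a_def b_def F_def by (simp add: add.assoc)
  finally have "(1 / (2 * real M)) * ((\<Sum>l=1..M-1. \<bar>H y - H (real l / real M)\<bar> * a l
      + \<bar>H y + H (real l / real M)\<bar> * b l) + \<bar>H y\<bar> * F) \<le> 2 * K"
    using assms(1) by (simp add: field_simps)
  then show ?thesis
    using abs_fejer_mean_error_le[OF assms(1), of H y] unfolding a_def b_def F_def by linarith
qed

section \<open>The error of the Fejer mean away from the boundary\<close>

lemma sum_inverse_square_shift_le:
  fixes R :: real
  assumes "R > 0"
  shows "(\<Sum>l=1..n. 1 / (R + real l)\<^sup>2) \<le> 1 / R - 1 / (R + real n)"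
proof (induction n)
  case 0 then show ?case by simp
next
  case (Suc n)
  have pos: "R + real n > 0" using assms by simp
  have "(R + real n) * (R + real n + 1) \<le> (R + real n + 1) * (R + real n + 1)"
    using pos by (intro mult_right_mono) auto
  then have "(R + real n) * (R + real n + 1) \<le> (R + real (Suc n))\<^sup>2"
    by (simp add: power2_eq_square algebra_simps)
  then have "1 / (R + real (Suc n))\<^sup>2 \<le> 1 / ((R + real n) * (R + real n + 1))"
    using pos by (intro divide_left_mono mult_pos_pos) auto
  also have "\<dots> = 1 / (R + real n) - 1 / (R + real (Suc n))"
    using pos by (simp add: field_simps)
  finally show ?case using Suc.IH by simp
qed

lemma sum_inverse_square_nodes_le:
  assumes "\<eta> > 0" "M \<ge> 1"
  shows "(\<Sum>l=1..M-1. 1 / (\<eta> + real l / real M)\<^sup>2) \<le> real M / \<eta>"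
proof -
  have "(\<Sum>l=1..M-1. 1 / (\<eta> + real l / real M)\<^sup>2) = (real M)\<^sup>2 * (\<Sum>l=1..M-1. 1 / (real M * \<eta> + real l)\<^sup>2)"
    unfolding sum_distrib_left using assms by (intro sum.cong refl) (simp add: field_simps)
  also have "\<dots> \<le> (real M)\<^sup>2 * (1 / (real M * \<eta>))"
    using sum_inverse_square_shift_le[of "real M * \<eta>" "M - 1"] assms
    by (intro mult_left_mono) (auto intro: order_trans)
  also have "\<dots> = real M / \<eta>" using assms by (simp add: power2_eq_square)
  finally show ?thesis .
qed

lemma sum_nodes_reflect:
  assumes "M \<ge> 1"
  shows "(\<Sum>l=1..M-1. g (real (M - l) / real M)) = (\<Sum>l=1..M-1. g (real l / real M))"
proof -
  have "(\<Sum>l=1..M-1. g (real l / real M)) = (\<Sum>l=1..M-1. g (real (M - 1 + 1 - l) / real M))"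
    by (rule sum.atLeastAtMost_rev)
  then show ?thesis using assms by simp
qed

lemma abs_diff_mult_fejer_kernel_le:
  assumes M: "M \<ge> 1" and xy: "x \<in> {0..1}" "y \<in> {0..1}"
    and holder: "\<bar>H y - H x\<bar> \<le> L * \<bar>y - x\<bar> powr p"
    and L: "0 \<le> L" and p: "0 \<le> p" and \<rho>: "0 < \<rho>"
  shows "\<bar>H y - H x\<bar> * fejer_kernel M (pi * (y - x)) \<le> L * \<rho> powr p * fejer_kernel M (pi * (y - x)) + 8 * L / (real M * \<rho>\<^sup>2)"
proof -
  define d where "d = y - x"
  have F0: "0 \<le> fejer_kernel M (pi * d)" using fejer_kernel_nonneg[OF M] .
  have d1: "\<bar>d\<bar> \<le> 1" using xy unfolding d_def atLeastAtMost_iff abs_le_iff by linarith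
  show ?thesis
  proof (cases "\<bar>d\<bar> < \<rho>")
    case True
    then have "\<bar>d\<bar> powr p \<le> \<rho> powr p" using p by (intro powr_mono2) auto
    then have "\<bar>H y - H x\<bar> \<le> L * \<rho> powr p" using holder L unfolding d_def by (meson order_trans mult_left_mono)
    then have "\<bar>H y - H x\<bar> * fejer_kernel M (pi * d) \<le> L * \<rho> powr p * fejer_kernel M (pi * d)"
      using F0 by (intro mult_right_mono)
    moreover have "0 \<le> 8 * L / (real M * \<rho>\<^sup>2)" using L by simp
    ultimately show ?thesis unfolding d_def by linarith
  next
    case False
    then have d0: "0 < \<bar>d\<bar>" and "\<rho>\<^sup>2 \<le> d\<^sup>2" using \<rho> by (auto simp: abs_le_square_iff[symmetric])
    have "\<bar>d\<bar> powr p \<le> 1" using powr_le1[OF p, of "\<bar>d\<bar>"] d1 by simp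
    then have hL: "\<bar>H y - H x\<bar> \<le> L" using holder L unfolding d_def by (meson order_trans mult_left_le)
    have "fejer_kernel M (pi * d) \<le> 8 / (real M * d\<^sup>2)" using fejer_kernel_le[OF M d0 d1] .
    also have "\<dots> \<le> 8 / (real M * \<rho>\<^sup>2)"
      using \<open>\<rho>\<^sup>2 \<le> d\<^sup>2\<close> M \<rho> by (intro divide_left_mono mult_left_mono mult_pos_pos) auto
    finally have "\<bar>H y - H x\<bar> * fejer_kernel M (pi * d) \<le> L * (8 / (real M * \<rho>\<^sup>2))"
      using hL F0 L by (intro mult_mono) auto
    moreover have "0 \<le> L * \<rho> powr p * fejer_kernel M (pi * d)" using L F0 by simp
    moreover have "L * (8 / (real M * \<rho>\<^sup>2)) = 8 * L / (real M * \<rho>\<^sup>2)" by simp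
    ultimately show ?thesis unfolding d_def by linarith
  qed
qed

lemma sum_fejer_near_nodes_le:
  assumes M: "M \<ge> 1" and y: "y \<in> {0..1}"
    and holder: "\<And>x z. x \<in> {0..1} \<Longrightarrow> z \<in> {0..1} \<Longrightarrow> \<bar>H x - H z\<bar> \<le> L * \<bar>x - z\<bar> powr p"
    and L: "0 \<le> L" and p: "0 \<le> p" and \<rho>: "0 < \<rho>"
  shows "(\<Sum>l=1..M-1. \<bar>H y - H (real l / real M)\<bar> * fejer_kernel M (pi * (y - real l / real M)))
    \<le> 2 * real M * L * \<rho> powr p + 8 * L / \<rho>\<^sup>2"
proof -
  define a where "a l = fejer_kernel M (pi * (y - real l / real M))" for l
  have "(\<Sum>l=1..M-1. \<bar>H y - H (real l / real M)\<bar> * a l)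
      \<le> (\<Sum>l=1..M-1. L * \<rho> powr p * a l + 8 * L / (real M * \<rho>\<^sup>2))"
  proof (intro sum_mono)
    fix l assume "l \<in> {1..M-1}"
    then have "real l / real M \<in> {0..1}" by auto
    then show "\<bar>H y - H (real l / real M)\<bar> * a l \<le> L * \<rho> powr p * a l + 8 * L / (real M * \<rho>\<^sup>2)"
      unfolding a_def using M y holder y L p \<rho> by (intro abs_diff_mult_fejer_kernel_le) auto
  qed
  also have "\<dots> = L * \<rho> powr p * (\<Sum>l=1..M-1. a l) + (real M - 1) / real M * (8 * L / \<rho>\<^sup>2)"
    using M by (simp add: sum.distrib sum_distrib_left of_nat_diff)
  also have "\<dots> \<le> L * \<rho> powr p * (2 * real M) + 1 * (8 * L / \<rho>\<^sup>2)"
    using sum_fejer_kernel_nodes_le[OF M, of y] L M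
    by (intro add_mono mult_left_mono mult_right_mono) (auto simp: a_def)
  finally show ?thesis unfolding a_def by (simp add: algebra_simps)
qed

lemma sum_fejer_reflected_nodes_le:
  assumes M: "M \<ge> 1" and K: "\<And>x. x \<in> {0..1} \<Longrightarrow> \<bar>H x\<bar> \<le> K"
    and \<eta>: "0 < \<eta>" and y: "\<eta> \<le> y" "y \<le> 1 - \<eta>"
  shows "(\<Sum>l=1..M-1. \<bar>H y + H (real l / real M)\<bar> * fejer_kernel M (pi * (y + real l / real M))) \<le> 32 * K / \<eta>"
proof -
  define g where "g t = 1 / (\<eta> + t)\<^sup>2" for t
  have hy: "\<bar>H y\<bar> \<le> K" using K y \<eta> by auto
  have K0: "0 \<le> K" using hy by linarith
  have "\<bar>H y + H (real l / real M)\<bar> * fejer_kernel M (pi * (y + real l / real M))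
      \<le> 2 * K * (8 / real M * (g (real l / real M) + g (real (M - l) / real M)))" if l: "l \<in> {1..M-1}" for l
  proof -
    define s where "s = y + real l / real M"
    have lM: "l \<le> M" using l by auto
    have "real (M - l) = real M - real l" using lM by (simp add: of_nat_diff)
    then have reflect: "real (M - l) / real M = 1 - real l / real M" using M by (simp add: field_simps)
    have lower: "\<eta> + real l / real M \<le> s" "\<eta> + real (M - l) / real M \<le> 2 - s"
      unfolding s_def reflect using y by simp_all
    have pos: "0 < \<eta> + real l / real M" "0 < \<eta> + real (M - l) / real M"
      using \<eta> by (simp_all add: add_pos_nonneg)
    have "fejer_kernel M (pi * s) \<le> 8 / real M * (1 / s\<^sup>2 + 1 / (2 - s)\<^sup>2)"
      using fejer_kernel_le_two_sided[OF M] lower pos by simp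
    also have "\<dots> \<le> 8 / real M * (g (real l / real M) + g (real (M - l) / real M))"
      unfolding g_def using lower pos
      by (intro mult_left_mono add_mono divide_left_mono power_mono mult_pos_pos) auto
    finally have "fejer_kernel M (pi * s) \<le> 8 / real M * (g (real l / real M) + g (real (M - l) / real M))" .
    moreover have "\<bar>H (real l / real M)\<bar> \<le> K" using K[of "real l / real M"] lM M by (simp add: field_simps)
    then have "\<bar>H y + H (real l / real M)\<bar> \<le> 2 * K" using hy by linarith
    ultimately show ?thesis unfolding s_def using K0 fejer_kernel_nonneg[OF M] by (intro mult_mono) auto
  qed
  then have "(\<Sum>l=1..M-1. \<bar>H y + H (real l / real M)\<bar> * fejer_kernel M (pi * (y + real l / real M)))
      \<le> (\<Sum>l=1..M-1. 2 * K * (8 / real M * (g (real l / real M) + g (real (M - l) / real M))))"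
    by (intro sum_mono)
  also have "\<dots> = 2 * K * (8 / real M) * ((\<Sum>l=1..M-1. g (real l / real M)) + (\<Sum>l=1..M-1. g (real (M - l) / real M)))"
    by (simp add: sum.distrib sum_distrib_left algebra_simps)
  also have "\<dots> = 2 * K * (8 / real M) * (2 * (\<Sum>l=1..M-1. 1 / (\<eta> + real l / real M)\<^sup>2))"
    unfolding sum_nodes_reflect[OF M, of g] by (simp add: g_def)
  also have "\<dots> \<le> 2 * K * (8 / real M) * (2 * (real M / \<eta>))"
    using sum_inverse_square_nodes_le[OF \<eta> M] K0 by (intro mult_left_mono) auto
  also have "\<dots> = 32 * K / \<eta>" using M by (simp add: field_simps)
  finally show ?thesis .
qed

lemma fejer_kernel_boundary_le:
  assumes M: "M \<ge> 1" and \<eta>: "0 < \<eta>" "1 \<le> real M * \<eta>" and y: "\<eta> \<le> y" "y \<le> 1 - \<eta>"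
  shows "fejer_kernel M (pi * y) + fejer_kernel M (pi * (y - 1)) \<le> 16 / \<eta>"
proof -
  have bound: "fejer_kernel M (pi * s) \<le> 8 / (real M * \<eta>\<^sup>2)" if "\<eta> \<le> \<bar>s\<bar>" "\<bar>s\<bar> \<le> 1" for s
  proof -
    have "fejer_kernel M (pi * s) \<le> 8 / (real M * s\<^sup>2)" using fejer_kernel_le[OF M] that \<eta> by simp
    also have "\<dots> \<le> 8 / (real M * \<eta>\<^sup>2)"
      using that \<eta> M by (intro divide_left_mono mult_left_mono mult_pos_pos)
        (auto simp: abs_le_square_iff[symmetric])
    finally show ?thesis .
  qed
  have "fejer_kernel M (pi * y) \<le> 8 / (real M * \<eta>\<^sup>2)" "fejer_kernel M (pi * (y - 1)) \<le> 8 / (real M * \<eta>\<^sup>2)"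
    using y \<eta> by (intro bound; simp)+
  then have "fejer_kernel M (pi * y) + fejer_kernel M (pi * (y - 1)) \<le> 8 / (real M * \<eta>\<^sup>2) + 8 / (real M * \<eta>\<^sup>2)"
    by (rule add_mono)
  also have "\<dots> = 16 / (real M * \<eta>\<^sup>2)" by simp
  also have "\<dots> = (16 / \<eta>) * (1 / (real M * \<eta>))" by (simp add: power2_eq_square)
  also have "\<dots> \<le> 16 / \<eta>" using \<eta> by (intro mult_left_le) (auto simp: field_simps)
  finally show ?thesis .
qed

lemma abs_fejer_mean_error_le_interior:
  assumes M: "M \<ge> 1" and K: "\<And>x. x \<in> {0..1} \<Longrightarrow> \<bar>H x\<bar> \<le> K"
    and holder: "\<And>x z. x \<in> {0..1} \<Longrightarrow> z \<in> {0..1} \<Longrightarrow> \<bar>H x - H z\<bar> \<le> L * \<bar>x - z\<bar> powr p"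
    and L: "0 \<le> L" and p: "0 \<le> p" and \<eta>: "0 < \<eta>" "1 \<le> real M * \<eta>" and \<rho>: "0 < \<rho>"
    and y: "\<eta> \<le> y" "y \<le> 1 - \<eta>"
  shows "\<bar>H y - fejer_mean M H y\<bar> \<le> L * \<rho> powr p + 4 * L / (real M * \<rho>\<^sup>2) + 24 * K / (real M * \<eta>)"
proof -
  have y01: "y \<in> {0..1}" using y \<eta> by auto
  have "\<bar>H y\<bar> * (fejer_kernel M (pi * y) + fejer_kernel M (pi * (y - 1))) \<le> K * (16 / \<eta>)"
    using K[OF y01] fejer_kernel_boundary_le[OF M \<eta> y] fejer_kernel_nonneg[OF M]
    by (intro mult_mono add_nonneg_nonneg) auto
  then have "(\<Sum>l=1..M-1. \<bar>H y - H (real l / real M)\<bar> * fejer_kernel M (pi * (y - real l / real M))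
        + \<bar>H y + H (real l / real M)\<bar> * fejer_kernel M (pi * (y + real l / real M)))
      + \<bar>H y\<bar> * (fejer_kernel M (pi * y) + fejer_kernel M (pi * (y - 1)))
      \<le> (2 * real M * L * \<rho> powr p + 8 * L / \<rho>\<^sup>2) + 32 * K / \<eta> + K * (16 / \<eta>)"
    using sum_fejer_near_nodes_le[of M y H L p \<rho>, OF M y01 holder L p \<rho>]
      sum_fejer_reflected_nodes_le[of M H K \<eta> y, OF M K \<eta>(1) y]
    unfolding sum.distrib by linarith
  then have "\<bar>H y - fejer_mean M H y\<bar> \<le> (1 / (2 * real M)) *
      ((2 * real M * L * \<rho> powr p + 8 * L / \<rho>\<^sup>2) + 32 * K / \<eta> + K * (16 / \<eta>))"
    by (intro order_trans[OF abs_fejer_mean_error_le[OF M] mult_left_mono]) simp_all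
  also have "\<dots> = L * \<rho> powr p + 4 * L / (real M * \<rho>\<^sup>2) + 24 * K / (real M * \<eta>)"
    using M by (simp add: field_simps)
  finally show ?thesis .
qed

section \<open>The L2 error of the interpolant\<close>

lemma disc_coeff_fejer_mean:
  assumes "1 \<le> k" "k \<le> M - 1"
  shows "disc_coeff M (fejer_mean M H) k = (1 - real k / real M) * disc_coeff M H k"
proof -
  have "fejer_mean M H = (\<lambda>y. \<Sum>k=1..M-1. ((1 - real k / real M) * disc_coeff M H k) * ebasis k y)"
    by (rule ext) (simp only: fejer_mean_def)
  then show ?thesis using disc_coeff_sine_poly[OF assms] by simp
qed

lemma has_integral_fejer_mean_minus_interp_sq:
  assumes "M \<ge> 1"
  shows "((\<lambda>y. (fejer_mean M H y - disc_interp M H y)\<^sup>2) has_integral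
    (1 / real M) * (\<Sum>l=1..M-1. (H (real l / real M) - fejer_mean M H (real l / real M))\<^sup>2)) {0..1}"
proof -
  define c where "c k = (1 - real k / real M) * disc_coeff M H k - disc_coeff M H k" for k
  have expansion: "fejer_mean M H y - disc_interp M H y = (\<Sum>k=1..M-1. c k * ebasis k y)" for y
    by (simp add: fejer_mean_def disc_interp_def c_def sum_subtractf[symmetric] left_diff_distrib)
  have "c k = disc_coeff M (\<lambda>z. fejer_mean M H z - H z) k" if "k \<in> {1..M-1}" for k
    using that by (simp add: c_def disc_coeff_diff disc_coeff_fejer_mean)
  then have "(\<Sum>k=1..M-1. (c k)\<^sup>2) = (\<Sum>k=1..M-1. (disc_coeff M (\<lambda>z. fejer_mean M H z - H z) k)\<^sup>2)"
    by simp
  also have "\<dots> = (1 / real M) * (\<Sum>l=1..M-1. (H (real l / real M) - fejer_mean M H (real l / real M))\<^sup>2)"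
    unfolding disc_coeff_parseval[OF assms] by (simp add: power2_commute)
  finally show ?thesis using has_integral_sine_poly_sq[of "{1..M-1}" c] by (simp add: expansion)
qed

lemma continuous_on_fejer_mean: "continuous_on S (fejer_mean M H)"
  unfolding fejer_mean_def[abs_def] ebasis_def by (intro continuous_intros)

lemma continuous_on_disc_interp: "continuous_on S (disc_interp M H)"
  unfolding disc_interp_def[abs_def] ebasis_def by (intro continuous_intros)

lemma L2_norm_interp_error_le:
  assumes M: "M \<ge> 1" and H: "continuous_on {0..1} H"
  shows "(L2_norm (\<lambda>y. H y - disc_interp M H y))\<^sup>2 \<le>
     2 * integral {0..1} (\<lambda>y. (H y - fejer_mean M H y)\<^sup>2) +
     2 * ((1 / real M) * (\<Sum>l=1..M-1. (H (real l / real M) - fejer_mean M H (real l / real M))\<^sup>2))"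
proof -
  have mean_int: "(\<lambda>y. (H y - fejer_mean M H y)\<^sup>2) integrable_on {0..1}"
    and interp_int: "(\<lambda>y. (H y - disc_interp M H y)\<^sup>2) integrable_on {0..1}"
    by (intro integrable_continuous_interval continuous_intros H continuous_on_fejer_mean continuous_on_disc_interp)+
  have "(H y - disc_interp M H y)\<^sup>2 \<le>
      2 * (H y - fejer_mean M H y)\<^sup>2 + 2 * (fejer_mean M H y - disc_interp M H y)\<^sup>2" for y
    using sum_squares_ge_zero[of "H y - 2 * fejer_mean M H y + disc_interp M H y" 0]
    by (simp add: power2_eq_square algebra_simps)
  moreover have "((\<lambda>y. 2 * (H y - fejer_mean M H y)\<^sup>2 + 2 * (fejer_mean M H y - disc_interp M H y)\<^sup>2) has_integral
      2 * integral {0..1} (\<lambda>y. (H y - fejer_mean M H y)\<^sup>2) +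
      2 * ((1 / real M) * (\<Sum>l=1..M-1. (H (real l / real M) - fejer_mean M H (real l / real M))\<^sup>2))) {0..1}"
    by (intro has_integral_add has_integral_mult_right integrable_integral mean_int
        has_integral_fejer_mean_minus_interp_sq[OF M])
  ultimately have "integral {0..1} (\<lambda>y. (H y - disc_interp M H y)\<^sup>2) \<le>
      2 * integral {0..1} (\<lambda>y. (H y - fejer_mean M H y)\<^sup>2) +
      2 * ((1 / real M) * (\<Sum>l=1..M-1. (H (real l / real M) - fejer_mean M H (real l / real M))\<^sup>2))"
    by (intro has_integral_le[OF integrable_integral[OF interp_int]])
  moreover have "(L2_norm (\<lambda>y. H y - disc_interp M H y))\<^sup>2 = integral {0..1} (\<lambda>y. (H y - disc_interp M H y)\<^sup>2)"
    unfolding L2_norm_def using interp_int by (intro real_sqrt_pow2 integral_nonneg) auto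
  ultimately show ?thesis by simp
qed

lemma integral_le_of_bound:
  fixes g :: "real \<Rightarrow> real"
  assumes "a \<le> b" "continuous_on {a..b} g" "\<And>x. x \<in> {a..b} \<Longrightarrow> g x \<le> c"
  shows "integral {a..b} g \<le> (b - a) * c"
proof -
  have "integral {a..b} g \<le> integral {a..b} (\<lambda>x. c)"
    by (rule integral_le[OF integrable_continuous_interval[OF assms(2)] integrable_const_ivl assms(3)])
  then show ?thesis using assms by simp
qed

lemma integral_sq_le_of_interior_bound:
  fixes f :: "real \<Rightarrow> real" and K B \<eta> :: real
  assumes f: "continuous_on {0..1} f" "\<And>y. y \<in> {0..1} \<Longrightarrow> \<bar>f y\<bar> \<le> 2 * K"
    and \<eta>: "0 < \<eta>" "\<eta> \<le> 1/4" and B: "0 \<le> B" "\<And>y. \<eta> \<le> y \<Longrightarrow> y \<le> 1 - \<eta> \<Longrightarrow> \<bar>f y\<bar> \<le> B"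
  shows "integral {0..1} (\<lambda>y. (f y)\<^sup>2) \<le> 8 * K\<^sup>2 * \<eta> + B\<^sup>2"
proof -
  define g where "g y = (f y)\<^sup>2" for y
  have g_cont: "continuous_on {a..b} g" if "0 \<le> a" "b \<le> 1" for a b
  proof -
    from that have "{a..b} \<subseteq> {0..1}" by auto
    then have "continuous_on {a..b} f" by (rule continuous_on_subset[OF f(1)])
    then show ?thesis unfolding g_def by (intro continuous_intros)
  qed
  have g_le: "g y \<le> 4 * K\<^sup>2" if "y \<in> {0..1}" for y
  proof -
    have "\<bar>f y\<bar>\<^sup>2 \<le> (2 * K)\<^sup>2" using f(2)[OF that] by (intro power_mono) auto
    then show ?thesis by (simp add: g_def power_mult_distrib)
  qed
  have g_le_B: "g y \<le> B\<^sup>2" if "y \<in> {\<eta>..1-\<eta>}" for y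
  proof -
    have "\<bar>f y\<bar>\<^sup>2 \<le> B\<^sup>2" using B(2) that by (intro power_mono) auto
    then show ?thesis by (simp add: g_def)
  qed
  have "integral {0..1} g = integral {0..\<eta>} g + integral {\<eta>..1-\<eta>} g + integral {1-\<eta>..1} g"
    using Henstock_Kurzweil_Integration.integral_combine[where a=0 and c=\<eta> and b=1 and f=g]
      Henstock_Kurzweil_Integration.integral_combine[where a=\<eta> and c="1-\<eta>" and b=1 and f=g]
      integrable_continuous_interval[OF g_cont] \<eta> by simp
  also have "\<dots> \<le> \<eta> * (4 * K\<^sup>2) + (1 - 2 * \<eta>) * B\<^sup>2 + \<eta> * (4 * K\<^sup>2)"
    using \<eta> integral_le_of_bound[of 0 \<eta> g] integral_le_of_bound[of \<eta> "1-\<eta>" g]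
      integral_le_of_bound[of "1-\<eta>" 1 g] g_cont g_le g_le_B
    by (intro add_mono) auto
  also have "\<dots> \<le> 8 * K\<^sup>2 * \<eta> + B\<^sup>2" using \<eta> by (simp add: algebra_simps)
  finally show ?thesis unfolding g_def .
qed

lemma card_nodes_near_boundary_le:
  fixes \<eta> :: real
  assumes M: "M \<ge> 1" and \<eta>: "0 < \<eta>"
  shows "real (card {l\<in>{1..M-1}. \<not> (\<eta> \<le> real l / real M \<and> real l / real M \<le> 1 - \<eta>)}) \<le> 2 * (\<eta> * real M + 1)"
proof -
  define N where "N = nat \<lceil>\<eta> * real M\<rceil>"
  have "0 \<le> \<eta> * real M" using \<eta> by simp
  then have "real N = real_of_int \<lceil>\<eta> * real M\<rceil>" unfolding N_def by simp
  then have N: "real N \<le> \<eta> * real M + 1" by linarith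
  have lt: "j < N" if "real j < \<eta> * real M" for j
  proof -
    have "int j < \<lceil>\<eta> * real M\<rceil>" using that by (simp add: less_ceiling_iff)
    then show ?thesis unfolding N_def by simp
  qed
  have "{l\<in>{1..M-1}. \<not> (\<eta> \<le> real l / real M \<and> real l / real M \<le> 1 - \<eta>)} \<subseteq> {..<N} \<union> (\<lambda>j. M - j) ` {..<N}"
  proof
    fix l assume "l \<in> {l\<in>{1..M-1}. \<not> (\<eta> \<le> real l / real M \<and> real l / real M \<le> 1 - \<eta>)}"
    then have l: "l \<le> M" "real l < \<eta> * real M \<or> real M - real l < \<eta> * real M"
      using M by (auto simp: field_simps)
    then have "l < N \<or> M - l < N" using lt[of l] lt[of "M - l"] by (auto simp: of_nat_diff)
    moreover have "l = M - (M - l)" using l(1) by simp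
    ultimately show "l \<in> {..<N} \<union> (\<lambda>j. M - j) ` {..<N}" by blast
  qed
  then have "card {l\<in>{1..M-1}. \<not> (\<eta> \<le> real l / real M \<and> real l / real M \<le> 1 - \<eta>)} \<le> card {..<N} + card ((\<lambda>j. M - j) ` {..<N})"
    by (intro order_trans[OF card_mono card_Un_le]) auto
  also have "\<dots> \<le> N + N" using card_image_le[of "{..<N}" "\<lambda>j. M - j"] by simp
  finally have "real (card {l\<in>{1..M-1}. \<not> (\<eta> \<le> real l / real M \<and> real l / real M \<le> 1 - \<eta>)}) \<le> real N + real N"
    by linarith
  also have "\<dots> \<le> 2 * (\<eta> * real M + 1)" using N by simp
  finally show ?thesis .
qed

lemma node_mean_sq_le_of_interior_bound:
  fixes f :: "real \<Rightarrow> real" and K B \<eta> :: real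
  assumes M: "M \<ge> 1" and f: "\<And>y. y \<in> {0..1} \<Longrightarrow> \<bar>f y\<bar> \<le> 2 * K"
    and \<eta>: "0 < \<eta>" and B: "0 \<le> B" "\<And>y. \<eta> \<le> y \<Longrightarrow> y \<le> 1 - \<eta> \<Longrightarrow> \<bar>f y\<bar> \<le> B"
  shows "(1 / real M) * (\<Sum>l=1..M-1. (f (real l / real M))\<^sup>2) \<le> 8 * K\<^sup>2 * (\<eta> + 1 / real M) + B\<^sup>2"
proof -
  define Bad where "Bad = {l. \<not> (\<eta> \<le> real l / real M \<and> real l / real M \<le> 1 - \<eta>)}"
  have "(f (real l / real M))\<^sup>2 \<le> 4 * K\<^sup>2 * (if l \<in> Bad then 1 else 0) + B\<^sup>2" if "l \<in> {1..M-1}" for l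
  proof (cases "l \<in> Bad")
    case True
    have "real l / real M \<in> {0..1}" using that by auto
    then have "\<bar>f (real l / real M)\<bar>\<^sup>2 \<le> (2 * K)\<^sup>2" using f by (intro power_mono) auto
    then show ?thesis using True by (simp add: power_mult_distrib add_increasing2)
  next
    case False
    then have "\<bar>f (real l / real M)\<bar>\<^sup>2 \<le> B\<^sup>2" using B(2) by (intro power_mono) (auto simp: Bad_def)
    then show ?thesis using False by simp
  qed
  then have "(\<Sum>l=1..M-1. (f (real l / real M))\<^sup>2) \<le> (\<Sum>l=1..M-1. 4 * K\<^sup>2 * (if l \<in> Bad then 1 else 0) + B\<^sup>2)"
    by (intro sum_mono)
  also have "\<dots> = 4 * K\<^sup>2 * real (card ({1..M-1} \<inter> Bad)) + (real M - 1) * B\<^sup>2"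
    using M by (simp add: sum.distrib sum_distrib_left[symmetric] sum.inter_restrict[symmetric] of_nat_diff)
  also have "\<dots> \<le> 4 * K\<^sup>2 * (2 * (\<eta> * real M + 1)) + real M * B\<^sup>2"
  proof (intro add_mono mult_left_mono mult_right_mono)
    have "{1..M-1} \<inter> Bad = {l\<in>{1..M-1}. \<not> (\<eta> \<le> real l / real M \<and> real l / real M \<le> 1 - \<eta>)}"
      unfolding Bad_def by auto
    then show "real (card ({1..M-1} \<inter> Bad)) \<le> 2 * (\<eta> * real M + 1)"
      using card_nodes_near_boundary_le[OF M \<eta>] by simp
  qed auto
  finally show ?thesis using M by (simp add: field_simps)
qed

lemma L2_norm_interp_error_le_of_interior_bound:
  fixes K B \<eta> :: real
  assumes M: "M \<ge> 1" and H: "continuous_on {0..1} H" "\<And>x. x \<in> {0..1} \<Longrightarrow> \<bar>H x\<bar> \<le> K"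
    and \<eta>: "0 < \<eta>" "\<eta> \<le> 1/4"
    and B: "0 \<le> B" "\<And>y. \<eta> \<le> y \<Longrightarrow> y \<le> 1 - \<eta> \<Longrightarrow> \<bar>H y - fejer_mean M H y\<bar> \<le> B"
  shows "(L2_norm (\<lambda>y. H y - disc_interp M H y))\<^sup>2 \<le> 32 * K\<^sup>2 * \<eta> + 16 * K\<^sup>2 / real M + 4 * B\<^sup>2"
proof -
  have global: "\<bar>H y - fejer_mean M H y\<bar> \<le> 2 * K" if "y \<in> {0..1}" for y
    using abs_fejer_mean_error_le_global[OF M that H(2)] .
  have "continuous_on {0..1} (\<lambda>y. H y - fejer_mean M H y)"
    by (intro continuous_intros H continuous_on_fejer_mean)
  then have "integral {0..1} (\<lambda>y. (H y - fejer_mean M H y)\<^sup>2) \<le> 8 * K\<^sup>2 * \<eta> + B\<^sup>2"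
    using global \<eta> B by (rule integral_sq_le_of_interior_bound)
  moreover have "(1 / real M) * (\<Sum>l=1..M-1. (H (real l / real M) - fejer_mean M H (real l / real M))\<^sup>2)
      \<le> 8 * K\<^sup>2 * (\<eta> + 1 / real M) + B\<^sup>2"
    using M global \<eta>(1) B by (rule node_mean_sq_le_of_interior_bound)
  ultimately have "(L2_norm (\<lambda>y. H y - disc_interp M H y))\<^sup>2
      \<le> 2 * (8 * K\<^sup>2 * \<eta> + B\<^sup>2) + 2 * (8 * K\<^sup>2 * (\<eta> + 1 / real M) + B\<^sup>2)"
    using L2_norm_interp_error_le[OF M H(1)] by (smt (verit))
  then show ?thesis by (simp add: algebra_simps)
qed

lemma L2_norm_interp_error_le_sup:
  assumes M: "M \<ge> 1" and H: "continuous_on {0..1} H" "\<And>x. x \<in> {0..1} \<Longrightarrow> \<bar>H x\<bar> \<le> K"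
  shows "(L2_norm (\<lambda>y. H y - disc_interp M H y))\<^sup>2 \<le> 40 * K\<^sup>2"
proof -
  have K0: "0 \<le> K" using H(2)[of 0] by auto
  have "(L2_norm (\<lambda>y. H y - disc_interp M H y))\<^sup>2 \<le> 32 * K\<^sup>2 * (1/4) + 16 * K\<^sup>2 / real M + 4 * (2 * K)\<^sup>2"
    using M H K0 abs_fejer_mean_error_le_global[where H=H and K=K, OF M _ H(2)]
    by (intro L2_norm_interp_error_le_of_interior_bound) auto
  also have "\<dots> \<le> 32 * K\<^sup>2 * (1/4) + 16 * K\<^sup>2 + 4 * (2 * K)\<^sup>2"
    using mult_left_mono[of 1 "real M" "K\<^sup>2"] M by (intro add_mono order_refl) (simp add: divide_le_eq)
  finally show ?thesis by (simp add: power_mult_distrib)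
qed

section \<open>Hoelder functions\<close>

lemma holder_space_nonneg_constant:
  assumes "H \<in> holder_space \<alpha>"
  obtains L where "0 \<le> L" "\<And>x y. x \<in> {0..1} \<Longrightarrow> y \<in> {0..1} \<Longrightarrow> \<bar>H x - H y\<bar> \<le> L * \<bar>x - y\<bar> powr (2 * \<alpha>)"
proof -
  obtain L where L: "\<forall>x\<in>{0..1}. \<forall>y\<in>{0..1}. \<bar>H x - H y\<bar> \<le> L * \<bar>x - y\<bar> powr (2 * \<alpha>)"
    using assms unfolding holder_space_def by blast
  show ?thesis
  proof (rule that[of "max L 0"])
    fix x y :: real assume "x \<in> {0..1}" "y \<in> {0..1}"
    then have "\<bar>H x - H y\<bar> \<le> L * \<bar>x - y\<bar> powr (2 * \<alpha>)" using L by blast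
    also have "\<dots> \<le> max L 0 * \<bar>x - y\<bar> powr (2 * \<alpha>)" by (intro mult_right_mono) auto
    finally show "\<bar>H x - H y\<bar> \<le> max L 0 * \<bar>x - y\<bar> powr (2 * \<alpha>)" .
  qed simp
qed

lemma continuous_on_holder:
  fixes H :: "real \<Rightarrow> real"
  assumes p: "0 < p" and holder: "\<And>x z. x \<in> {0..1} \<Longrightarrow> z \<in> {0..1} \<Longrightarrow> \<bar>H x - H z\<bar> \<le> L * \<bar>x - z\<bar> powr p"
  shows "continuous_on {0..1} H"
  unfolding continuous_on_def
proof
  fix x :: real assume x: "x \<in> {0..1}"
  have "((\<lambda>z. H z - H x) \<longlongrightarrow> 0) (at x within {0..1})"
  proof (rule Lim_null_comparison)
    show "\<forall>\<^sub>F z in at x within {0..1}. norm (H z - H x) \<le> L * \<bar>z - x\<bar> powr p"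
      unfolding eventually_at_filter using holder x by (auto intro: always_eventually)
    have "((\<lambda>z. L * \<bar>z - x\<bar> powr p) \<longlongrightarrow> L * \<bar>x - x\<bar> powr p) (at x within {0..1})"
      using p by (intro tendsto_intros) auto
    then show "((\<lambda>z. L * \<bar>z - x\<bar> powr p) \<longlongrightarrow> 0) (at x within {0..1})" by simp
  qed
  then show "(H \<longlongrightarrow> H x) (at x within {0..1})" by (simp add: LIM_zero_iff)
qed

lemma abs_le_sup_norm:
  assumes "H \<in> holder_space \<alpha>" "0 \<le> \<alpha>" "x \<in> {0..1}"
  shows "\<bar>H x\<bar> \<le> sup_norm H"
proof -
  obtain L where L: "0 \<le> L" "\<And>x y. x \<in> {0..1} \<Longrightarrow> y \<in> {0..1} \<Longrightarrow> \<bar>H x - H y\<bar> \<le> L * \<bar>x - y\<bar> powr (2 * \<alpha>)"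
    using holder_space_nonneg_constant[OF assms(1)] by blast
  have "\<bar>H z\<bar> \<le> \<bar>H 0\<bar> + L" if "z \<in> {0..1}" for z
  proof -
    have "L * \<bar>z - 0\<bar> powr (2 * \<alpha>) \<le> L"
      using that assms(2) L(1) by (intro mult_left_le powr_le1) auto
    then show ?thesis using L(2)[OF that, of 0] by auto
  qed
  then have "bdd_above ((\<lambda>z. \<bar>H z\<bar>) ` {0..1})" by (intro bdd_aboveI2) auto
  then show ?thesis unfolding sup_norm_def using assms(3) by (rule cSUP_upper2) simp
qed

lemma holder_norm_bound:
  assumes H: "H \<in> holder_space \<alpha>" "0 \<le> \<alpha>" and xz: "x \<in> {0..1}" "z \<in> {0..1}"
  shows "\<bar>H x - H z\<bar> \<le> holder_norm \<alpha> H * \<bar>x - z\<bar> powr (2 * \<alpha>)"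
proof (cases "x = z")
  case False
  define P where "P = {(x, y). x \<in> {0..1::real} \<and> y \<in> {0..1::real} \<and> x \<noteq> y}"
  define q where "q p = \<bar>H (fst p) - H (snd p)\<bar> / \<bar>fst p - snd p\<bar> powr (2 * \<alpha>)" for p :: "real \<times> real"
  obtain L where L: "\<And>x y. x \<in> {0..1} \<Longrightarrow> y \<in> {0..1} \<Longrightarrow> \<bar>H x - H y\<bar> \<le> L * \<bar>x - y\<bar> powr (2 * \<alpha>)"
    using holder_space_nonneg_constant[OF H(1)] by blast
  have "q p \<le> L" if "p \<in> P" for p
    using that L by (auto simp: P_def q_def divide_le_eq)
  then have "q (x, z) \<le> (SUP p\<in>P. q p)"
    using False xz by (intro cSUP_upper bdd_aboveI2) (auto simp: P_def)
  also have "\<dots> \<le> holder_norm \<alpha> H"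
    using abs_le_sup_norm[OF H, of 0] unfolding holder_norm_def P_def q_def by simp
  finally show ?thesis using False by (simp add: q_def divide_le_eq)
qed simp

lemma holder_norm_nonneg:
  assumes "H \<in> holder_space \<alpha>" "0 \<le> \<alpha>"
  shows "0 \<le> holder_norm \<alpha> H"
  using holder_norm_bound[OF assms, of 0 1] by simp

section \<open>The convergence rate\<close>

lemma rate_exponent_bounds:
  fixes \<alpha> :: real
  assumes "0 < \<alpha>" "\<alpha> < 1/2"
  defines "\<gamma> \<equiv> 8 * \<alpha>\<^sup>2 / (4 * \<alpha> + 1)"
  shows "0 < \<gamma>" "\<gamma> \<le> 2/3" "\<gamma> * (1 + \<alpha>) \<le> 2 * \<alpha>"
proof -
  have d: "0 < 4 * \<alpha> + 1" using assms by simp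
  show "0 < \<gamma>" unfolding \<gamma>_def using assms d by simp
  have sq: "\<alpha> * \<alpha> \<le> \<alpha> * (1/2)" using assms by (intro mult_left_mono) auto
  then have "8 * \<alpha>\<^sup>2 \<le> 4 * \<alpha>" by (simp add: power2_eq_square)
  also have "\<dots> \<le> 2/3 * (4 * \<alpha> + 1)" using assms(2) by simp
  finally have "8 * \<alpha>\<^sup>2 \<le> 2/3 * (4 * \<alpha> + 1)" .
  then show "\<gamma> \<le> 2/3" unfolding \<gamma>_def using d by (simp add: divide_le_eq)
  have "\<alpha> * \<alpha> \<le> 1/4" using sq assms(2) by linarith
  then have "\<alpha> * \<alpha> * \<alpha> \<le> \<alpha> * (1/4)"
    using assms(1) mult_left_mono[of "\<alpha> * \<alpha>" "1/4" \<alpha>] by (simp add: mult.commute)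
  then have "8 * \<alpha>\<^sup>2 * (1 + \<alpha>) \<le> 2 * \<alpha> * (4 * \<alpha> + 1)" by (simp add: power2_eq_square algebra_simps)
  then show "\<gamma> * (1 + \<alpha>) \<le> 2 * \<alpha>" unfolding \<gamma>_def using d by (simp add: field_simps)
qed

lemma rate_scales:
  fixes \<alpha> \<eta> \<rho> v :: real
  assumes \<alpha>: "0 < \<alpha>" "\<alpha> < 1/2" and M: "M \<ge> 1"
  defines "\<gamma> \<equiv> 8 * \<alpha>\<^sup>2 / (4 * \<alpha> + 1)"
  assumes \<eta>_def: "\<eta> = (1 / real M) powr \<gamma>" and v_def: "v = (1 / real M) powr (\<gamma> / 2)"
    and \<rho>_def: "\<rho> = \<eta> powr (1 / (4 * \<alpha>))"
  shows "1 \<le> real M * \<eta>" "\<rho> powr (2 * \<alpha>) = v" "1 / (real M * \<rho>\<^sup>2) \<le> v" "1 / (real M * \<eta>) \<le> v"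
proof -
  define m where "m = 1 / real M"
  have m: "0 < m" "m \<le> 1" using M by (auto simp: m_def)
  note \<gamma> = rate_exponent_bounds[OF \<alpha>, folded \<gamma>_def]
  have "m \<le> \<eta>" unfolding \<eta>_def m_def[symmetric] using powr_mono'[of \<gamma> 1 m] \<gamma> m by simp
  then show "1 \<le> real M * \<eta>" using M by (simp add: m_def field_simps)
  show "\<rho> powr (2 * \<alpha>) = v"
    unfolding \<rho>_def \<eta>_def v_def m_def[symmetric] using \<alpha> m by (simp add: powr_powr)
  have "\<rho>\<^sup>2 = m powr (\<gamma> / (2 * \<alpha>))"
    unfolding \<rho>_def \<eta>_def m_def[symmetric] using m \<alpha> by (simp add: powr_powr powr_realpow[symmetric] field_simps)
  then have "1 / (real M * \<rho>\<^sup>2) = m powr (1 - \<gamma> / (2 * \<alpha>))"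
    unfolding m_def using M by (simp add: powr_diff)
  also have "\<dots> \<le> m powr (\<gamma> / 2)"
    using \<gamma>(3) \<alpha> m by (intro powr_mono') (auto simp: field_simps)
  finally show "1 / (real M * \<rho>\<^sup>2) \<le> v" unfolding v_def m_def .
  have "1 / (real M * \<eta>) = m powr (1 - \<gamma>)" unfolding \<eta>_def m_def using M by (simp add: powr_diff)
  also have "\<dots> \<le> m powr (\<gamma> / 2)" using \<gamma> m by (intro powr_mono') auto
  finally show "1 / (real M * \<eta>) \<le> v" unfolding v_def m_def .
qed

lemma abs_fejer_mean_error_le_rate:
  fixes \<alpha> K L :: real
  assumes \<alpha>: "0 < \<alpha>" "\<alpha> < 1/2" and M: "M \<ge> 1"
    and K: "\<And>x. x \<in> {0..1} \<Longrightarrow> \<bar>H x\<bar> \<le> K"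
    and holder: "\<And>x z. x \<in> {0..1} \<Longrightarrow> z \<in> {0..1} \<Longrightarrow> \<bar>H x - H z\<bar> \<le> L * \<bar>x - z\<bar> powr (2 * \<alpha>)"
    and L: "0 \<le> L" "L \<le> K"
  defines "\<gamma> \<equiv> 8 * \<alpha>\<^sup>2 / (4 * \<alpha> + 1)"
  assumes y: "(1 / real M) powr \<gamma> \<le> y" "y \<le> 1 - (1 / real M) powr \<gamma>"
  shows "\<bar>H y - fejer_mean M H y\<bar> \<le> 29 * K * (1 / real M) powr (\<gamma> / 2)"
proof -
  define \<eta> where "\<eta> = (1 / real M) powr \<gamma>"
  define \<rho> where "\<rho> = \<eta> powr (1 / (4 * \<alpha>))"
  define v where "v = (1 / real M) powr (\<gamma> / 2)"
  note scales = rate_scales[OF \<alpha> M, folded \<gamma>_def, OF \<eta>_def v_def \<rho>_def]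
  have K0: "0 \<le> K" using K[of 0] by auto
  have \<eta>0: "0 < \<eta>" and \<rho>0: "0 < \<rho>" using M by (simp_all add: \<eta>_def \<rho>_def)
  have "\<bar>H y - fejer_mean M H y\<bar> \<le> L * \<rho> powr (2 * \<alpha>) + 4 * L / (real M * \<rho>\<^sup>2) + 24 * K / (real M * \<eta>)"
    using abs_fejer_mean_error_le_interior[where p="2 * \<alpha>" and \<eta>=\<eta> and \<rho>=\<rho>, OF M K holder L(1) _ \<eta>0 scales(1) \<rho>0] y \<alpha>
    unfolding \<eta>_def by simp
  also have "\<dots> \<le> K * v + 4 * K * v + 24 * K * v"
  proof (intro add_mono)
    show "L * \<rho> powr (2 * \<alpha>) \<le> K * v" unfolding scales(2) using L by (intro mult_right_mono) (auto simp: v_def)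
    show "4 * L / (real M * \<rho>\<^sup>2) \<le> 4 * K * v" using mult_mono[OF _ scales(3), of "4 * L" "4 * K"] L by simp
    show "24 * K / (real M * \<eta>) \<le> 24 * K * v" using mult_left_mono[OF scales(4), of "24 * K"] K0 by simp
  qed
  finally show ?thesis unfolding v_def by simp
qed

lemma L2_norm_interp_error_le_rate:
  fixes \<alpha> K L :: real
  assumes \<alpha>: "0 < \<alpha>" "\<alpha> < 1/2" and M: "M \<ge> 1"
    and K: "\<And>x. x \<in> {0..1} \<Longrightarrow> \<bar>H x\<bar> \<le> K"
    and holder: "\<And>x z. x \<in> {0..1} \<Longrightarrow> z \<in> {0..1} \<Longrightarrow> \<bar>H x - H z\<bar> \<le> L * \<bar>x - z\<bar> powr (2 * \<alpha>)"
    and L: "0 \<le> L" "L \<le> K"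
  shows "(L2_norm (\<lambda>y. H y - disc_interp M H y))\<^sup>2 \<le> 3500 * K\<^sup>2 * (1 / real M) powr (8 * \<alpha>\<^sup>2 / (4 * \<alpha> + 1))"
proof -
  define \<gamma> where "\<gamma> = 8 * \<alpha>\<^sup>2 / (4 * \<alpha> + 1)"
  define \<eta> where "\<eta> = (1 / real M) powr \<gamma>"
  note \<gamma> = rate_exponent_bounds[OF \<alpha>, folded \<gamma>_def]
  have H: "continuous_on {0..1} H" using \<alpha> holder by (intro continuous_on_holder[of "2 * \<alpha>"]) auto
  have K0: "0 \<le> K" using K[of 0] by auto
  have M\<eta>: "1 / real M \<le> \<eta>" unfolding \<eta>_def using powr_mono'[of \<gamma> 1 "1 / real M"] \<gamma> M by simp
  have \<eta>0: "0 < \<eta>" using M by (simp add: \<eta>_def)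
  show ?thesis
  proof (cases "\<eta> \<le> 1/4")
    case True
    have "(L2_norm (\<lambda>y. H y - disc_interp M H y))\<^sup>2
        \<le> 32 * K\<^sup>2 * \<eta> + 16 * K\<^sup>2 / real M + 4 * (29 * K * (1 / real M) powr (\<gamma> / 2))\<^sup>2"
      using M H K \<eta>0 True K0 abs_fejer_mean_error_le_rate[OF \<alpha> M K holder L]
      by (intro L2_norm_interp_error_le_of_interior_bound) (auto simp: \<eta>_def \<gamma>_def)
    also have "\<dots> \<le> 32 * K\<^sup>2 * \<eta> + 16 * K\<^sup>2 * \<eta> + 4 * (841 * K\<^sup>2 * \<eta>)"
    proof (intro add_mono order_refl)
      show "16 * K\<^sup>2 / real M \<le> 16 * K\<^sup>2 * \<eta>" using mult_left_mono[OF M\<eta>, of "16 * K\<^sup>2"] by simp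
      show "4 * (29 * K * (1 / real M) powr (\<gamma> / 2))\<^sup>2 \<le> 4 * (841 * K\<^sup>2 * \<eta>)"
      proof -
        have "((1 / real M) powr (\<gamma> / 2))\<^sup>2 = \<eta>"
          unfolding \<eta>_def by (simp add: power2_eq_square powr_add[symmetric])
        then show ?thesis by (simp add: power_mult_distrib)
      qed
    qed
    also have "32 * K\<^sup>2 * \<eta> + 16 * K\<^sup>2 * \<eta> + 4 * (841 * K\<^sup>2 * \<eta>) \<le> 3500 * K\<^sup>2 * \<eta>"
      using mult_right_mono[of 3412 3500 "K\<^sup>2 * \<eta>"] \<eta>0 by (simp add: mult.assoc)
    finally show ?thesis unfolding \<eta>_def \<gamma>_def .
  next
    case False
    have "(L2_norm (\<lambda>y. H y - disc_interp M H y))\<^sup>2 \<le> 40 * K\<^sup>2"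
      using M H K by (rule L2_norm_interp_error_le_sup)
    also have "\<dots> \<le> 3500 * K\<^sup>2 * (1/4)" using zero_le_power2[of K] by linarith
    also have "\<dots> \<le> 3500 * K\<^sup>2 * \<eta>" using False by (intro mult_left_mono) auto
    finally show ?thesis unfolding \<eta>_def \<gamma>_def .
  qed
qed

theorem lemma5p5:
  fixes \<theta> \<alpha> :: real
  assumes "\<theta> > 0" and "0 < \<alpha>" and "\<alpha> < 1/2"
  shows "\<exists>C>0. \<forall>H M. H \<in> holder_space \<alpha> \<longrightarrow> H \<in> D_space \<theta> \<alpha> \<longrightarrow> M \<ge> 2 \<longrightarrow>
     (L2_norm (\<lambda>y. H y - disc_interp M H y))\<^sup>2 \<le>
       C * (max (sup_norm H) (max (holder_norm \<alpha> H) (D_norm \<theta> \<alpha> H)))\<^sup>2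
         * (1 / real M) powr (8 * \<alpha>\<^sup>2 / (4 * \<alpha> + 1))"
proof (intro exI[of _ 3500] conjI allI impI)
  fix H :: "real \<Rightarrow> real" and M :: nat
  assume H: "H \<in> holder_space \<alpha>" and "M \<ge> 2"
  define K where "K = max (sup_norm H) (max (holder_norm \<alpha> H) (D_norm \<theta> \<alpha> H))"
  have \<alpha>: "0 \<le> \<alpha>" using assms by simp
  show "(L2_norm (\<lambda>y. H y - disc_interp M H y))\<^sup>2 \<le> 3500 * K\<^sup>2 * (1 / real M) powr (8 * \<alpha>\<^sup>2 / (4 * \<alpha> + 1))"
  proof (rule L2_norm_interp_error_le_rate)
    show "\<bar>H x\<bar> \<le> K" if "x \<in> {0..1}" for x
      using abs_le_sup_norm[OF H \<alpha> that] unfolding K_def by linarith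
    show "holder_norm \<alpha> H \<le> K" unfolding K_def by linarith
  qed (use assms \<open>M \<ge> 2\<close> holder_norm_bound[OF H \<alpha>] holder_norm_nonneg[OF H \<alpha>] in auto)
qed simp

end
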